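(* Let $(S,\mu)$ be a complete positive measure space and let $X$ be a Banach space whose norm is Fréchet differentiable. A non-zero element $f\in L^1(\mu,X)$ is a smooth point of $L^1(\mu,X)$ if $f(s)\neq 0$ for $\mu$-almost every $s\in S$. Conversely, if in addition $\mu$ is $\sigma$-finite and a non-zero $f\in L^1(\mu,X)$ is a smooth point of $L^1(\mu,X)$, then $f(s)\neq 0$ for $\mu$-almost every $s\in S$.
   Context: $L^1(\mu,X)$ is the Lebesgue–Bochner space of (classes of a.e. equal) strongly measurable $f:S\to X$ with $\int_S\|f(s)\|\,d\mu(s)<\infty$, normed by $\|f\|=\int_S\|f(s)\|\,d\mu(s)$. For a non-zero $x$ in a normed space $Y$, a support map at $x$ is a norm-one bounded linear functional $F$ on $Y$ with $F(x)=\|x\|$; $x$ is smooth if the support map at $x$ is unique. The norm of $X$ is Fréchet differentiable if for every non-zero $x\in X$ there is $\varphi\in X^*$ with $\lim_{h\to0}\big|\|x+h\|-\|x\|-\varphi(h)\big|/\|h\|=0$. *)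

theory Defs
  imports "HOL-Analysis.Analysis"
begin

text \<open>A (semi)normed function space is given by a carrier V (a real linear subspace of
  the functions 's => 'x, operations pointwise) together with a seminorm N.  For L^1 the carrier is the set of
  Bochner integrable functions and N f is the integral of the pointwise norm; the quotient by
  a.e. equality is handled implicitly, since bounded functionals cannot distinguish
  functions at distance zero.\<close>

text \<open>We do
  not use the library's Bochner integral since it requires X to be second countable
  (separable), whereas X here is an arbitrary Banach space.\<close>
definition strongly_measurable :: "'s measure \<Rightarrow> ('s \<Rightarrow> 'x::real_normed_vector) \<Rightarrow> bool" where
  "strongly_measurable M f \<longleftrightarrow>
     (\<exists>u :: nat \<Rightarrow> 's \<Rightarrow> 'x. (\<forall>n. simple_function M (u n)) \<and>
        (AE s in M. (\<lambda>n. u n s) \<longlonglongrightarrow> f s))"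

definition L1 :: "'s measure \<Rightarrow> ('s \<Rightarrow> 'x::real_normed_vector) set" where
  "L1 M = {f. strongly_measurable M f \<and> (\<integral>\<^sup>+ s. ennreal (norm (f s)) \<partial>M) < \<infinity>}"

definition L1norm :: "'s measure \<Rightarrow> ('s \<Rightarrow> 'x::real_normed_vector) \<Rightarrow> real" where
  "L1norm M f = enn2real (\<integral>\<^sup>+ s. ennreal (norm (f s)) \<partial>M)"

definition bounded_linear_functional ::
  "('s \<Rightarrow> 'x::real_normed_vector) set \<Rightarrow> (('s \<Rightarrow> 'x) \<Rightarrow> real) \<Rightarrow> (('s \<Rightarrow> 'x) \<Rightarrow> real) \<Rightarrow> bool" where
  "bounded_linear_functional V N F \<longleftrightarrow>
     (\<forall>g\<in>V. \<forall>h\<in>V. F (\<lambda>s. g s + h s) = F g + F h) \<and>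
     (\<forall>c. \<forall>g\<in>V. F (\<lambda>s. c *\<^sub>R g s) = c * F g) \<and>
     (\<exists>C. \<forall>g\<in>V. \<bar>F g\<bar> \<le> C * N g)"

definition functional_norm ::
  "'v set \<Rightarrow> ('v \<Rightarrow> real) \<Rightarrow> ('v \<Rightarrow> real) \<Rightarrow> real" where
  "functional_norm V N F = Sup {\<bar>F g\<bar> | g. g \<in> V \<and> N g \<le> 1}"

definition support_map ::
  "('s \<Rightarrow> 'x::real_normed_vector) set \<Rightarrow> (('s \<Rightarrow> 'x) \<Rightarrow> real) \<Rightarrow> ('s \<Rightarrow> 'x) \<Rightarrow> (('s \<Rightarrow> 'x) \<Rightarrow> real) \<Rightarrow> bool" where
  "support_map V N x F \<longleftrightarrow>
     bounded_linear_functional V N F \<and> functional_norm V N F = 1 \<and> F x = N x"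

definition smooth_point ::
  "('s \<Rightarrow> 'x::real_normed_vector) set \<Rightarrow> (('s \<Rightarrow> 'x) \<Rightarrow> real) \<Rightarrow> ('s \<Rightarrow> 'x) \<Rightarrow> bool" where
  "smooth_point V N x \<longleftrightarrow>
     (\<exists>F. support_map V N x F \<and>
        (\<forall>G. support_map V N x G \<longrightarrow> (\<forall>g\<in>V. G g = F g)))"

definition frechet_smooth_norm :: "'x::real_normed_vector itself \<Rightarrow> bool" where
  "frechet_smooth_norm _ \<longleftrightarrow> (\<forall>x::'x. x \<noteq> 0 \<longrightarrow> norm differentiable (at x))"

end

theory Submission
  imports Defs
begin

text \<open>
  Let D x be the Frechet derivative of the norm of X at x \<noteq> 0.  Since the difference quotients
  of the norm are bounded by norm v, dominated convergence computes the one-sided derivative of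
  the L1 norm at f in direction g: it is the integral of D (f s) (g s) over the set where f does
  not vanish plus the integral of norm (g s) over the zero set Z of f.  Every support map at f lies
  below this one-sided derivative.  If Z is null the derivative is linear in g, and a linear
  functional lying below a linear one coincides with it, so the support map is unique.
  Otherwise, by sigma-finiteness, Z contains a set A of finite positive measure, and for any
  x \<noteq> 0 adding the integral of D x (g s) over A yields a second support map, which differs from
  the first one at the indicator of A times x.
\<close>

section \<open>The derivative of the norm\<close>

definition norm_deriv :: "'a::real_normed_vector \<Rightarrow> 'a \<Rightarrow> real" where
  "norm_deriv x = frechet_derivative norm (at x)"

definition norm_diff_quotient :: "'a::real_normed_vector \<Rightarrow> 'a \<Rightarrow> real \<Rightarrow> real" where
  "norm_diff_quotient x v t = (norm (x + t *\<^sub>R v) - norm x) / t"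

lemma has_derivative_norm_deriv:
  "norm differentiable (at x) \<Longrightarrow> (norm has_derivative norm_deriv x) (at x)"
  unfolding norm_deriv_def by (rule frechet_derivative_works[THEN iffD1])

lemma bounded_linear_norm_deriv:
  "norm differentiable (at x) \<Longrightarrow> bounded_linear (norm_deriv x)"
  by (rule has_derivative_bounded_linear[OF has_derivative_norm_deriv])

lemma norm_diff_quotient_tendsto:
  fixes x v :: "'a::real_normed_vector"
  assumes "norm differentiable (at x)"
  shows "(norm_diff_quotient x v \<longlongrightarrow> norm_deriv x v) (at 0)"
proof -
  have line: "((\<lambda>t. x + t *\<^sub>R v) has_derivative (\<lambda>t. t *\<^sub>R v)) (at 0)"
    by (auto intro!: derivative_eq_intros)
  have "((\<lambda>t. norm (x + t *\<^sub>R v)) has_derivative (\<lambda>t. norm_deriv x (t *\<^sub>R v))) (at 0)"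
    using diff_chain_at[OF line] has_derivative_norm_deriv[OF assms] by (simp add: o_def)
  moreover have "(\<lambda>t. norm_deriv x (t *\<^sub>R v)) = (*) (norm_deriv x v)"
    using bounded_linear_norm_deriv[OF assms]
    by (auto simp: linear_scale bounded_linear.linear)
  ultimately have "((\<lambda>t. norm (x + t *\<^sub>R v)) has_field_derivative norm_deriv x v) (at 0)"
    by (simp add: has_field_derivative_def)
  then show ?thesis
    unfolding DERIV_def norm_diff_quotient_def by simp
qed

lemma abs_norm_diff_quotient_le: "\<bar>norm_diff_quotient x v t\<bar> \<le> norm v"
proof -
  have "\<bar>norm (x + t *\<^sub>R v) - norm x\<bar> \<le> \<bar>t\<bar> * norm v"
    by (metis add_diff_cancel_left' norm_scaleR norm_triangle_ineq3)
  then have "\<bar>norm (x + t *\<^sub>R v) - norm x\<bar> / \<bar>t\<bar> \<le> \<bar>t\<bar> * norm v / \<bar>t\<bar>"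
    by (rule divide_right_mono) simp
  also have "\<dots> \<le> norm v"
    by simp
  finally show ?thesis
    by (simp add: norm_diff_quotient_def abs_div)
qed

lemma norm_diff_quotient_self:
  assumes "t > 0"
  shows "norm_diff_quotient x x t = norm x"
proof -
  have "x + t *\<^sub>R x = (1 + t) *\<^sub>R x"
    by (simp add: scaleR_add_left)
  then have "norm (x + t *\<^sub>R x) = (1 + t) * norm x"
    using assms by simp
  then show ?thesis
    using assms by (simp add: norm_diff_quotient_def algebra_simps)
qed

lemma abs_norm_deriv_le:
  assumes "norm differentiable (at x)"
  shows "\<bar>norm_deriv x v\<bar> \<le> norm v"
proof (rule tendsto_upperbound)
  show "((\<lambda>t. \<bar>norm_diff_quotient x v t\<bar>) \<longlongrightarrow> \<bar>norm_deriv x v\<bar>) (at 0)"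
    by (rule tendsto_rabs[OF norm_diff_quotient_tendsto[OF assms]])
  show "\<forall>\<^sub>F t in at 0. \<bar>norm_diff_quotient x v t\<bar> \<le> norm v"
    by (simp add: abs_norm_diff_quotient_le)
qed simp

lemma norm_deriv_self:
  assumes "norm differentiable (at x)"
  shows "norm_deriv x x = norm x"
proof -
  have lim: "(norm_diff_quotient x x \<longlongrightarrow> norm_deriv x x) (at_right 0)"
    using norm_diff_quotient_tendsto[OF assms] by (rule tendsto_mono[OF at_within_le_at])
  have "eventually (\<lambda>t. norm_diff_quotient x x t = norm x) (at_right 0)"
    by (rule eventually_at_rightI[of 0 1]) (simp_all add: norm_diff_quotient_self)
  then have "(norm_diff_quotient x x \<longlongrightarrow> norm x) (at_right 0)"
    by (rule tendsto_eventually)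
  then show ?thesis
    using tendsto_unique[OF trivial_limit_at_right_real lim] by blast
qed

lemma norm_diff_quotient_LIMSEQ:
  fixes x v :: "'a::real_normed_vector"
  assumes "x \<noteq> 0 \<Longrightarrow> norm differentiable (at x)"
  shows "(\<lambda>n. norm_diff_quotient x v (inverse (real (Suc n))))
           \<longlonglongrightarrow> (if x = 0 then norm v else norm_deriv x v)"
proof (cases "x = 0")
  case True
  then show ?thesis by (simp add: norm_diff_quotient_def)
next
  case False
  have "filterlim (\<lambda>n. inverse (real (Suc n))) (at_right 0) sequentially"
    by (rule tendsto_imp_filterlim_at_right[OF LIMSEQ_inverse_real_of_nat]) simp
  then have "filterlim (\<lambda>n. inverse (real (Suc n))) (at 0) sequentially"
    by (rule filterlim_mono[OF _ at_within_le_at order_refl])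
  then show ?thesis
    using False filterlim_compose[OF norm_diff_quotient_tendsto[OF assms]] by simp
qed

lemma frechet_smooth_normD:
  "frechet_smooth_norm TYPE('a::real_normed_vector) \<Longrightarrow> (x::'a) \<noteq> 0 \<Longrightarrow> norm differentiable (at x)"
  unfolding frechet_smooth_norm_def by blast

section \<open>Support maps\<close>

lemma abs_le_functional_norm:
  assumes F: "bounded_linear_functional V N F" and h: "h \<in> V"
    and V_scaleR: "\<And>c g. g \<in> V \<Longrightarrow> (\<lambda>s. c *\<^sub>R g s) \<in> V"
    and N_scaleR: "\<And>c g. g \<in> V \<Longrightarrow> N (\<lambda>s. c *\<^sub>R g s) = \<bar>c\<bar> * N g"
    and N_nonneg: "\<And>g. g \<in> V \<Longrightarrow> N g \<ge> 0"
  shows "\<bar>F h\<bar> \<le> functional_norm V N F * N h"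
proof -
  obtain C where C: "\<And>g. g \<in> V \<Longrightarrow> \<bar>F g\<bar> \<le> C * N g"
    using F unfolding bounded_linear_functional_def by blast
  have F_scaleR: "F (\<lambda>s. c *\<^sub>R g s) = c * F g" if "g \<in> V" for c g
    using F that unfolding bounded_linear_functional_def by blast
  show ?thesis
  proof (cases "N h = 0")
    case True
    then show ?thesis
      using C[OF h] by simp
  next
    case False
    then have pos: "N h > 0"
      using N_nonneg[OF h] by linarith
    define h' where "h' = (\<lambda>s. (1 / N h) *\<^sub>R h s)"
    have "h' \<in> V" "N h' = 1"
      using V_scaleR[OF h] N_scaleR[OF h] pos by (simp_all add: h'_def)
    moreover have "bdd_above {\<bar>F g\<bar> | g. g \<in> V \<and> N g \<le> 1}"
    proof (rule bdd_aboveI)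
      fix y assume "y \<in> {\<bar>F g\<bar> | g. g \<in> V \<and> N g \<le> 1}"
      then obtain g where g: "y = \<bar>F g\<bar>" "g \<in> V" "N g \<le> 1"
        by blast
      then have "y \<le> C * N g"
        using C by simp
      also have "\<dots> \<le> \<bar>C\<bar> * N g"
        using N_nonneg[OF g(2)] by (intro mult_right_mono) simp_all
      also have "\<dots> \<le> \<bar>C\<bar>"
        using g(2,3) N_nonneg by (simp add: mult_left_le)
      finally show "y \<le> \<bar>C\<bar>" .
    qed
    ultimately have "\<bar>F h'\<bar> \<le> functional_norm V N F"
      unfolding functional_norm_def by (intro cSup_upper) auto
    moreover have "F h' = F h / N h"
      using F_scaleR[OF h] by (simp add: h'_def)
    ultimately show ?thesis
      using pos by (simp add: abs_div divide_le_eq)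
  qed
qed

lemma smooth_pointI:
  assumes F: "support_map V N x F"
    and V_scaleR: "\<And>c g. g \<in> V \<Longrightarrow> (\<lambda>s. c *\<^sub>R g s) \<in> V"
    and le: "\<And>G g. support_map V N x G \<Longrightarrow> g \<in> V \<Longrightarrow> G g \<le> F g"
  shows "smooth_point V N x"
  unfolding smooth_point_def
proof (intro exI conjI allI impI ballI)
  fix G g assume G: "support_map V N x G" and g: "g \<in> V"
  have "G (\<lambda>s. (- 1) *\<^sub>R g s) = (- 1) * G g" "F (\<lambda>s. (- 1) *\<^sub>R g s) = (- 1) * F g"
    using F G g unfolding support_map_def bounded_linear_functional_def by blast+
  then have "F g \<le> G g"
    using le[OF G V_scaleR[OF g, of "- 1"]] by simp
  then show "G g = F g"
    using le[OF G g] by simp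
qed (rule F)

lemma smooth_point_support_map_unique:
  assumes "smooth_point V N x" "support_map V N x F" "support_map V N x G" "g \<in> V"
  shows "F g = G g"
  using assms unfolding smooth_point_def by metis

section \<open>Measurability and L1\<close>

lemma (in sigma_finite_measure) finite_positive_measure_subset:
  assumes "A \<in> sets M" "emeasure M A > 0"
  obtains B where "B \<in> sets M" "B \<subseteq> A" "0 < emeasure M B" "emeasure M B < \<infinity>"
proof (cases "emeasure M A = \<infinity>")
  case True
  then show ?thesis
    using approx_PInf_emeasure_with_finite[OF assms(1), of 0] that by auto
next
  case False
  then show ?thesis
    using that[OF assms(1) order_refl assms(2)] by (simp add: less_top)
qed

lemma strongly_measurable_simple_function:
  "simple_function M f \<Longrightarrow> strongly_measurable M f"
  unfolding strongly_measurable_def by (intro exI[of _ "\<lambda>n. f"]) simp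

lemma strongly_measurable_add:
  fixes g h :: "'a \<Rightarrow> 'b::real_normed_vector"
  assumes "strongly_measurable M g" "strongly_measurable M h"
  shows "strongly_measurable M (\<lambda>x. g x + h x)"
proof -
  obtain u where u: "\<And>n. simple_function M (u n)" "AE s in M. (\<lambda>n. u n s) \<longlonglongrightarrow> g s"
    using assms(1) unfolding strongly_measurable_def by blast
  obtain v where v: "\<And>n. simple_function M (v n)" "AE s in M. (\<lambda>n. v n s) \<longlonglongrightarrow> h s"
    using assms(2) unfolding strongly_measurable_def by blast
  show ?thesis
    unfolding strongly_measurable_def
  proof (intro exI conjI allI)
    show "simple_function M (\<lambda>x. u n x + v n x)" for n
      using simple_function_compose2[OF u(1) v(1)] .
    show "AE s in M. (\<lambda>n. u n s + v n s) \<longlonglongrightarrow> g s + h s"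
      using u(2) v(2) by eventually_elim (rule tendsto_add)
  qed
qed

lemma strongly_measurable_scaleR:
  fixes g :: "'a \<Rightarrow> 'b::real_normed_vector"
  assumes "strongly_measurable M g"
  shows "strongly_measurable M (\<lambda>x. c *\<^sub>R g x)"
proof -
  obtain u where u: "\<And>n. simple_function M (u n)" "AE s in M. (\<lambda>n. u n s) \<longlonglongrightarrow> g s"
    using assms unfolding strongly_measurable_def by blast
  show ?thesis
    unfolding strongly_measurable_def
  proof (intro exI conjI allI)
    show "simple_function M (\<lambda>x. c *\<^sub>R u n x)" for n
      using simple_function_compose[OF u(1), of "\<lambda>y. c *\<^sub>R y" n] by (simp add: o_def)
    show "AE s in M. (\<lambda>n. c *\<^sub>R u n s) \<longlonglongrightarrow> c *\<^sub>R g s"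
      using u(2) by eventually_elim (intro tendsto_intros)
  qed
qed

lemma L1norm_nonneg: "L1norm M g \<ge> 0"
  unfolding L1norm_def by simp

lemma L1_indicator_scaleR:
  assumes "A \<in> sets M" "emeasure M A < \<infinity>"
  shows "(\<lambda>s. indicator A s *\<^sub>R x) \<in> L1 M"
  unfolding L1_def
proof (intro CollectI conjI)
  have "simple_function M (\<lambda>s. indicator A s *\<^sub>R x)"
    using simple_function_compose[OF simple_function_indicator[OF assms(1)], of "\<lambda>r. r *\<^sub>R x"]
    by (simp add: o_def)
  then show "strongly_measurable M (\<lambda>s. indicator A s *\<^sub>R x)"
    by (rule strongly_measurable_simple_function)
  have "(\<integral>\<^sup>+ s. ennreal (norm (indicator A s *\<^sub>R x)) \<partial>M)
      = (\<integral>\<^sup>+ s. ennreal (norm x) * indicator A s \<partial>M)"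
    by (intro nn_integral_cong) (simp add: indicator_def)
  also have "\<dots> = ennreal (norm x) * emeasure M A"
    using assms(1) by (rule nn_integral_cmult_indicator)
  also have "\<dots> < \<infinity>"
    using assms(2) by (simp add: ennreal_mult_less_top)
  finally show "(\<integral>\<^sup>+ s. ennreal (norm (indicator A s *\<^sub>R x)) \<partial>M) < \<infinity>" .
qed

context complete_measure
begin

lemma borel_measurable_AE_eq:
  fixes f g :: "'a \<Rightarrow> 'b::topological_space"
  assumes "g \<in> borel_measurable M" "AE x in M. f x = g x"
  shows "f \<in> borel_measurable M"
proof (rule borel_measurableI)
  fix S :: "'b set" assume "open S"
  then have "g -` S \<inter> space M \<in> sets M"
    using assms(1) by (simp add: measurable_sets_borel)
  then show "f -` S \<inter> space M \<in> sets M"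
    by (rule in_sets_AE[rotated]) (use assms(2) in \<open>auto elim!: AE_mp\<close>)
qed

lemma borel_measurable_AE_LIMSEQ:
  fixes u :: "nat \<Rightarrow> 'a \<Rightarrow> 'b::metric_space"
  assumes u: "\<And>n. u n \<in> borel_measurable M" and lim: "AE x in M. (\<lambda>n. u n x) \<longlonglongrightarrow> h x"
  shows "h \<in> borel_measurable M"
proof -
  obtain N where N: "N \<in> null_sets M" "{x\<in>space M. \<not> (\<lambda>n. u n x) \<longlonglongrightarrow> h x} \<subseteq> N"
    using lim by (auto simp: eventually_ae_filter)
  define c :: 'b where "c = undefined"
  define u' where "u' n x = (if x \<in> N then c else u n x)" for n x
  define h' where "h' x = (if x \<in> N then c else h x)" for x
  have "u' n \<in> borel_measurable M" for n
    unfolding u'_def using null_setsD2[OF N(1)] u by measurable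
  moreover have "(\<lambda>n. u' n x) \<longlonglongrightarrow> h' x" if "x \<in> space M" for x
    using N that by (auto simp: u'_def h'_def)
  ultimately have "h' \<in> borel_measurable M"
    by (rule borel_measurable_LIMSEQ_metric)
  moreover have "AE x in M. h x = h' x"
    using AE_not_in[OF N(1)] by eventually_elim (auto simp: h'_def)
  ultimately show ?thesis
    by (rule borel_measurable_AE_eq)
qed

lemma borel_measurable_continuous_comp:
  fixes h :: "'a \<Rightarrow> 'b::real_normed_vector" and T :: "'b \<Rightarrow> 'c::metric_space"
  assumes "strongly_measurable M h" "continuous_on UNIV T"
  shows "(\<lambda>x. T (h x)) \<in> borel_measurable M"
proof -
  obtain u where u: "\<And>n. simple_function M (u n)" "AE s in M. (\<lambda>n. u n s) \<longlonglongrightarrow> h s"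
    using assms(1) unfolding strongly_measurable_def by blast
  have "simple_function M (\<lambda>x. T (u n x))" for n
    using simple_function_compose[OF u(1), of T n] by (simp add: o_def)
  then have "(\<lambda>x. T (u n x)) \<in> borel_measurable M" for n
    by (rule borel_measurable_simple_function)
  moreover have "AE x in M. (\<lambda>n. T (u n x)) \<longlonglongrightarrow> T (h x)"
    using u(2) by eventually_elim (use assms(2) continuous_on_tendsto_compose[of UNIV T] in auto)
  ultimately show ?thesis
    by (rule borel_measurable_AE_LIMSEQ)
qed

lemma borel_measurable_norm_strongly_measurable:
  "strongly_measurable M h \<Longrightarrow> (\<lambda>x. norm (h x)) \<in> borel_measurable M"
  by (rule borel_measurable_continuous_comp) (simp_all add: continuous_on_norm_id)

lemma sets_Collect_zero_strongly_measurable: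
  assumes "strongly_measurable M h"
  shows "{x\<in>space M. h x = 0} \<in> sets M"
proof -
  have "{x\<in>space M. h x = 0} = (\<lambda>x. norm (h x)) -` {0} \<inter> space M"
    by auto
  also have "\<dots> \<in> sets M"
    by (rule measurable_sets[OF borel_measurable_norm_strongly_measurable[OF assms]]) simp
  finally show ?thesis .
qed

lemma borel_measurable_norm_diff_quotient:
  assumes "strongly_measurable M f" "strongly_measurable M g"
  shows "(\<lambda>s. norm_diff_quotient (f s) (g s) t) \<in> borel_measurable M"
proof -
  have "(\<lambda>s. norm (f s + t *\<^sub>R g s)) \<in> borel_measurable M"
    by (intro borel_measurable_norm_strongly_measurable strongly_measurable_add
        strongly_measurable_scaleR assms)
  moreover have "(\<lambda>s. norm (f s)) \<in> borel_measurable M"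
    using assms(1) by (rule borel_measurable_norm_strongly_measurable)
  ultimately show ?thesis
    unfolding norm_diff_quotient_def
    by (intro borel_measurable_divide borel_measurable_diff borel_measurable_const)
qed

lemma borel_measurable_norm_deriv:
  fixes f g :: "'a \<Rightarrow> 'b::real_normed_vector"
  assumes smooth: "frechet_smooth_norm TYPE('b)"
    and f: "strongly_measurable M f" and g: "strongly_measurable M g"
    and \<phi>: "\<phi> \<in> borel_measurable M"
  shows "(\<lambda>s. if f s = 0 then \<phi> s else norm_deriv (f s) (g s)) \<in> borel_measurable M"
proof -
  have "(\<lambda>s. if f s = 0 then norm (g s) else norm_deriv (f s) (g s)) \<in> borel_measurable M"
  proof (rule borel_measurable_AE_LIMSEQ)
    show "(\<lambda>s. norm_diff_quotient (f s) (g s) (inverse (real (Suc n)))) \<in> borel_measurable M" for n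
      using f g by (rule borel_measurable_norm_diff_quotient)
    show "AE s in M. (\<lambda>n. norm_diff_quotient (f s) (g s) (inverse (real (Suc n))))
        \<longlonglongrightarrow> (if f s = 0 then norm (g s) else norm_deriv (f s) (g s))"
      using frechet_smooth_normD[OF smooth] by (intro AE_I2 norm_diff_quotient_LIMSEQ)
  qed
  from measurable_If[OF \<phi> this sets_Collect_zero_strongly_measurable[OF f]] show ?thesis
    by (simp cong: if_cong)
qed

lemma integrable_norm_L1:
  "g \<in> L1 M \<Longrightarrow> integrable M (\<lambda>x. norm (g x))"
  unfolding L1_def
  by (auto simp: integrable_iff_bounded intro: borel_measurable_norm_strongly_measurable)

lemma L1norm_eq_integral:
  assumes "g \<in> L1 M"
  shows "L1norm M g = (\<integral>x. norm (g x) \<partial>M)"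
  using nn_integral_eq_integral[OF integrable_norm_L1[OF assms]] by (simp add: L1norm_def)

lemma L1_add:
  assumes "g \<in> L1 M" "h \<in> L1 M"
  shows "(\<lambda>x. g x + h x) \<in> L1 M"
proof -
  have "(\<integral>\<^sup>+ x. ennreal (norm (g x + h x)) \<partial>M)
      \<le> (\<integral>\<^sup>+ x. ennreal (norm (g x)) + ennreal (norm (h x)) \<partial>M)"
    by (intro nn_integral_mono) (simp add: norm_triangle_ineq flip: ennreal_plus)
  also have "\<dots> = (\<integral>\<^sup>+ x. ennreal (norm (g x)) \<partial>M) + (\<integral>\<^sup>+ x. ennreal (norm (h x)) \<partial>M)"
    using assms unfolding L1_def
    by (intro nn_integral_add) (auto intro: borel_measurable_norm_strongly_measurable)
  also have "\<dots> < \<infinity>"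
    using assms unfolding L1_def by auto
  finally show ?thesis
    using assms unfolding L1_def by (auto intro: strongly_measurable_add)
qed

lemma L1_scaleR:
  assumes "g \<in> L1 M"
  shows "(\<lambda>x. c *\<^sub>R g x) \<in> L1 M"
proof -
  have "(\<integral>\<^sup>+ x. ennreal (norm (c *\<^sub>R g x)) \<partial>M) = ennreal \<bar>c\<bar> * (\<integral>\<^sup>+ x. ennreal (norm (g x)) \<partial>M)"
    using assms unfolding L1_def
    by (auto simp: ennreal_mult intro!: nn_integral_cmult borel_measurable_norm_strongly_measurable)
  also have "\<dots> < \<infinity>"
    using assms unfolding L1_def by (simp add: ennreal_mult_less_top)
  finally show ?thesis
    using assms unfolding L1_def by (auto intro: strongly_measurable_scaleR)
qed

lemma L1norm_scaleR:
  assumes "g \<in> L1 M"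
  shows "L1norm M (\<lambda>x. c *\<^sub>R g x) = \<bar>c\<bar> * L1norm M g"
  using assms by (simp add: L1norm_eq_integral L1_scaleR)

section \<open>Support maps of L1\<close>

lemma support_map_le_L1norm:
  assumes "support_map (L1 M) (L1norm M) f G" "g \<in> L1 M"
  shows "G g \<le> L1norm M g"
  using abs_le_functional_norm[of "L1 M" "L1norm M" G g] assms
  by (auto simp: support_map_def L1_scaleR L1norm_scaleR L1norm_nonneg)

lemma abs_integral_pointwise_functional_le:
  fixes \<Phi> :: "'a \<Rightarrow> 'b::real_normed_vector \<Rightarrow> real"
  assumes g: "g \<in> L1 M"
    and bound: "\<And>s v. \<bar>\<Phi> s v\<bar> \<le> norm v"
    and meas: "(\<lambda>s. \<Phi> s (g s)) \<in> borel_measurable M"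
  shows "integrable M (\<lambda>s. \<Phi> s (g s))" and "\<bar>\<integral>s. \<Phi> s (g s) \<partial>M\<bar> \<le> L1norm M g"
proof -
  show int: "integrable M (\<lambda>s. \<Phi> s (g s))"
    by (rule Bochner_Integration.integrable_bound[OF integrable_norm_L1[OF g] meas])
       (simp add: bound)
  have "\<bar>\<integral>s. \<Phi> s (g s) \<partial>M\<bar> \<le> (\<integral>s. \<bar>\<Phi> s (g s)\<bar> \<partial>M)"
    by (rule integral_abs_bound)
  also have "\<dots> \<le> (\<integral>s. norm (g s) \<partial>M)"
    by (intro integral_mono integrable_abs int integrable_norm_L1[OF g] bound)
  finally show "\<bar>\<integral>s. \<Phi> s (g s) \<partial>M\<bar> \<le> L1norm M g"
    by (simp add: L1norm_eq_integral[OF g])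
qed

lemma bounded_linear_functional_integral:
  fixes \<Phi> :: "'a \<Rightarrow> 'b::real_normed_vector \<Rightarrow> real"
  assumes lin: "\<And>s. linear (\<Phi> s)" and bound: "\<And>s v. \<bar>\<Phi> s v\<bar> \<le> norm v"
    and meas: "\<And>g. g \<in> L1 M \<Longrightarrow> (\<lambda>s. \<Phi> s (g s)) \<in> borel_measurable M"
  shows "bounded_linear_functional (L1 M) (L1norm M) (\<lambda>g. \<integral>s. \<Phi> s (g s) \<partial>M)"
  unfolding bounded_linear_functional_def
proof (intro conjI ballI allI exI[of _ 1])
  have int: "integrable M (\<lambda>s. \<Phi> s (g s))" if "g \<in> L1 M" for g :: "'a \<Rightarrow> 'b"
    using abs_integral_pointwise_functional_le(1)[OF that bound meas[OF that]] .
  fix g h :: "'a \<Rightarrow> 'b" assume g: "g \<in> L1 M" and h: "h \<in> L1 M"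
  show "(\<integral>s. \<Phi> s (g s + h s) \<partial>M) = (\<integral>s. \<Phi> s (g s) \<partial>M) + (\<integral>s. \<Phi> s (h s) \<partial>M)"
    using int[OF g] int[OF h] lin by (simp add: linear_add)
next
  fix c and g :: "'a \<Rightarrow> 'b"
  show "(\<integral>s. \<Phi> s (c *\<^sub>R g s) \<partial>M) = c * (\<integral>s. \<Phi> s (g s) \<partial>M)"
    using lin by (simp add: linear_scale)
next
  fix g :: "'a \<Rightarrow> 'b" assume "g \<in> L1 M"
  then show "\<bar>\<integral>s. \<Phi> s (g s) \<partial>M\<bar> \<le> 1 * L1norm M g"
    using abs_integral_pointwise_functional_le(2)[OF _ bound meas] by simp
qed

lemma support_map_integral:
  fixes \<Phi> :: "'a \<Rightarrow> 'b::real_normed_vector \<Rightarrow> real"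
  assumes f: "f \<in> L1 M" "L1norm M f \<noteq> 0"
    and lin: "\<And>s. linear (\<Phi> s)" and bound: "\<And>s v. \<bar>\<Phi> s v\<bar> \<le> norm v"
    and at_f: "\<And>s. \<Phi> s (f s) = norm (f s)"
    and meas: "\<And>g. g \<in> L1 M \<Longrightarrow> (\<lambda>s. \<Phi> s (g s)) \<in> borel_measurable M"
  shows "support_map (L1 M) (L1norm M) f (\<lambda>g. \<integral>s. \<Phi> s (g s) \<partial>M)"
proof -
  let ?F = "\<lambda>g. \<integral>s. \<Phi> s (g s) \<partial>M"
  have F: "bounded_linear_functional (L1 M) (L1norm M) ?F"
    using lin bound meas by (rule bounded_linear_functional_integral)
  have F_f: "?F f = L1norm M f"
    by (simp add: at_f L1norm_eq_integral[OF f(1)])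
  have pos: "L1norm M f > 0"
    using f(2) L1norm_nonneg[of M f] by linarith
  define f' where "f' = (\<lambda>s. (1 / L1norm M f) *\<^sub>R f s)"
  have "f' \<in> L1 M" "L1norm M f' = 1" "?F f' = 1"
    using F F_f pos L1_scaleR[OF f(1)] L1norm_scaleR[OF f(1)] f(1)
    unfolding f'_def bounded_linear_functional_def by auto
  then have "functional_norm (L1 M) (L1norm M) ?F = 1"
    unfolding functional_norm_def
    using abs_integral_pointwise_functional_le(2)[OF _ bound meas]
    by (intro cSup_eq_maximum) force+
  then show ?thesis
    unfolding support_map_def using F F_f by simp
qed

lemma support_map_norm_deriv:
  fixes f :: "'a \<Rightarrow> 'b::real_normed_vector" and \<psi> :: "'a \<Rightarrow> 'b \<Rightarrow> real"
  assumes smooth: "frechet_smooth_norm TYPE('b)" and f: "f \<in> L1 M" "L1norm M f \<noteq> 0"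
    and \<psi>_linear: "\<And>s. linear (\<psi> s)" and \<psi>_bound: "\<And>s v. \<bar>\<psi> s v\<bar> \<le> norm v"
    and \<psi>_meas: "\<And>g. g \<in> L1 M \<Longrightarrow> (\<lambda>s. \<psi> s (g s)) \<in> borel_measurable M"
  shows "support_map (L1 M) (L1norm M) f
           (\<lambda>g. \<integral>s. (if f s = 0 then \<psi> s (g s) else norm_deriv (f s) (g s)) \<partial>M)"
proof -
  note deriv = frechet_smooth_normD[OF smooth]
  have "support_map (L1 M) (L1norm M) f
      (\<lambda>g. \<integral>s. (\<lambda>v. if f s = 0 then \<psi> s v else norm_deriv (f s) v) (g s) \<partial>M)"
  proof (rule support_map_integral[OF f])
    show "linear (\<lambda>v. if f s = 0 then \<psi> s v else norm_deriv (f s) v)" for s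
      using \<psi>_linear bounded_linear.linear[OF bounded_linear_norm_deriv[OF deriv]]
      by (cases "f s = 0") simp_all
    show "\<bar>if f s = 0 then \<psi> s v else norm_deriv (f s) v\<bar> \<le> norm v" for s v
      using \<psi>_bound abs_norm_deriv_le[OF deriv] by simp
    show "(if f s = 0 then \<psi> s (f s) else norm_deriv (f s) (f s)) = norm (f s)" for s
      using linear_0[OF \<psi>_linear] norm_deriv_self[OF deriv] by simp
    show "(\<lambda>s. if f s = 0 then \<psi> s (g s) else norm_deriv (f s) (g s)) \<in> borel_measurable M"
      if "g \<in> L1 M" for g
      using that f(1) \<psi>_meas[OF that] unfolding L1_def
      by (intro borel_measurable_norm_deriv[OF smooth]) auto
  qed
  then show ?thesis
    by simp
qed

lemma support_map_le_integral_norm_diff_quotient: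
  assumes f: "f \<in> L1 M" and g: "g \<in> L1 M" and G: "support_map (L1 M) (L1norm M) f G"
    and t: "t > 0"
  shows "G g \<le> (\<integral>s. norm_diff_quotient (f s) (g s) t \<partial>M)"
proof -
  have tg: "(\<lambda>s. t *\<^sub>R g s) \<in> L1 M" and ftg: "(\<lambda>s. f s + t *\<^sub>R g s) \<in> L1 M"
    using L1_scaleR[OF g] L1_add[OF f L1_scaleR[OF g]] by auto
  have "L1norm M f + t * G g = G (\<lambda>s. f s + t *\<^sub>R g s)"
    using G f g tg unfolding support_map_def bounded_linear_functional_def by auto
  also have "\<dots> \<le> L1norm M (\<lambda>s. f s + t *\<^sub>R g s)"
    using G ftg by (rule support_map_le_L1norm)
  finally have "G g \<le> (L1norm M (\<lambda>s. f s + t *\<^sub>R g s) - L1norm M f) / t"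
    using t by (simp add: field_simps)
  also have "\<dots> = (\<integral>s. norm_diff_quotient (f s) (g s) t \<partial>M)"
    using integrable_norm_L1[OF ftg] integrable_norm_L1[OF f]
    by (simp add: L1norm_eq_integral f ftg norm_diff_quotient_def)
  finally show ?thesis .
qed

lemma support_map_le_integral_norm_deriv:
  fixes f g :: "'a \<Rightarrow> 'b::real_normed_vector"
  assumes smooth: "frechet_smooth_norm TYPE('b)"
    and f: "f \<in> L1 M" and g: "g \<in> L1 M" and G: "support_map (L1 M) (L1norm M) f G"
  shows "G g \<le> (\<integral>s. (if f s = 0 then norm (g s) else norm_deriv (f s) (g s)) \<partial>M)"
proof -
  let ?q = "\<lambda>n s. norm_diff_quotient (f s) (g s) (inverse (real (Suc n)))"
  have meas: "?q n \<in> borel_measurable M" for n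
    using f g unfolding L1_def by (auto intro: borel_measurable_norm_diff_quotient)
  have "(\<lambda>n. \<integral>s. ?q n s \<partial>M)
      \<longlonglongrightarrow> (\<integral>s. (if f s = 0 then norm (g s) else norm_deriv (f s) (g s)) \<partial>M)"
  proof (rule integral_dominated_convergence[OF _ meas integrable_norm_L1[OF g]])
    show "(\<lambda>s. if f s = 0 then norm (g s) else norm_deriv (f s) (g s)) \<in> borel_measurable M"
      using f g unfolding L1_def
      by (auto intro!: borel_measurable_norm_deriv[OF smooth] borel_measurable_norm_strongly_measurable)
    show "AE s in M. (\<lambda>n. ?q n s)
        \<longlonglongrightarrow> (if f s = 0 then norm (g s) else norm_deriv (f s) (g s))"
      using frechet_smooth_normD[OF smooth] by (intro AE_I2 norm_diff_quotient_LIMSEQ)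
    show "AE s in M. norm (?q n s) \<le> norm (g s)" for n
      by (simp add: abs_norm_diff_quotient_le)
  qed
  moreover have "G g \<le> (\<integral>s. ?q n s \<partial>M)" for n
    using f g G by (rule support_map_le_integral_norm_diff_quotient) simp
  ultimately show ?thesis
    by (intro LIMSEQ_le_const) auto
qed

lemma support_map_norm_deriv_0:
  fixes f :: "'a \<Rightarrow> 'b::real_normed_vector"
  assumes "frechet_smooth_norm TYPE('b)" "f \<in> L1 M" "L1norm M f \<noteq> 0"
  shows "support_map (L1 M) (L1norm M) f
           (\<lambda>g. \<integral>s. (if f s = 0 then 0 else norm_deriv (f s) (g s)) \<partial>M)"
  using support_map_norm_deriv[OF assms, of "\<lambda>s v. 0"]
    bounded_linear.linear[OF bounded_linear_zero] by simp

lemma support_map_norm_deriv_indicator: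
  fixes f :: "'a \<Rightarrow> 'b::real_normed_vector"
  assumes smooth: "frechet_smooth_norm TYPE('b)" and f: "f \<in> L1 M" "L1norm M f \<noteq> 0"
    and A: "A \<in> sets M" and x: "x \<noteq> 0"
  shows "support_map (L1 M) (L1norm M) f
           (\<lambda>g. \<integral>s. (if f s = 0 then indicator A s * norm_deriv x (g s)
                      else norm_deriv (f s) (g s)) \<partial>M)"
proof (rule support_map_norm_deriv[OF smooth f])
  have deriv: "bounded_linear (norm_deriv x)"
    using bounded_linear_norm_deriv frechet_smooth_normD[OF smooth x] .
  then show "linear (\<lambda>v. indicator A s * norm_deriv x v)" for s
    by (intro bounded_linear.linear bounded_linear_const_mult)
  show "\<bar>indicator A s * norm_deriv x v\<bar> \<le> norm v" for s v
    using abs_norm_deriv_le[OF frechet_smooth_normD[OF smooth x], of v]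
    by (auto simp: indicator_def)
  show "(\<lambda>s. indicator A s * norm_deriv x (g s)) \<in> borel_measurable M" if "g \<in> L1 M" for g
  proof -
    have "(\<lambda>s. norm_deriv x (g s)) \<in> borel_measurable M"
      using that deriv unfolding L1_def
      by (auto intro: borel_measurable_continuous_comp linear_continuous_on)
    then show ?thesis
      by (rule borel_measurable_times[OF borel_measurable_indicator[OF A]])
  qed
qed

lemma integral_norm_deriv_indicator_scaleR:
  fixes f :: "'a \<Rightarrow> 'b::real_normed_vector"
  assumes smooth: "frechet_smooth_norm TYPE('b)"
    and A: "A \<in> sets M" "emeasure M A < \<infinity>" and zero_on_A: "\<And>s. s \<in> A \<Longrightarrow> f s = 0"
    and x: "x \<noteq> 0"
  shows "(\<integral>s. (if f s = 0 then 0 else norm_deriv (f s) (indicator A s *\<^sub>R x)) \<partial>M) = 0"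
    and "(\<integral>s. (if f s = 0 then indicator A s * norm_deriv x (indicator A s *\<^sub>R x)
                 else norm_deriv (f s) (indicator A s *\<^sub>R x)) \<partial>M) = norm x * measure M A"
proof -
  have deriv_0: "norm_deriv y 0 = 0" if "y \<noteq> 0" for y :: 'b
    using bounded_linear_norm_deriv[OF frechet_smooth_normD[OF smooth that]]
    by (rule linear_0[OF bounded_linear.linear])
  show "(\<integral>s. (if f s = 0 then 0 else norm_deriv (f s) (indicator A s *\<^sub>R x)) \<partial>M) = 0"
    by (subst Bochner_Integration.integral_cong[OF refl, where g = "\<lambda>s. 0"])
       (auto simp: zero_on_A deriv_0 indicator_def)
  have "(\<integral>s. (if f s = 0 then indicator A s * norm_deriv x (indicator A s *\<^sub>R x)
                 else norm_deriv (f s) (indicator A s *\<^sub>R x)) \<partial>M)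
      = (\<integral>s. norm x * indicator A s \<partial>M)"
    using norm_deriv_self[OF frechet_smooth_normD[OF smooth x]]
    by (intro Bochner_Integration.integral_cong) (auto simp: zero_on_A deriv_0 indicator_def)
  also have "\<dots> = norm x * measure M A"
    using A by (simp add: less_top)
  finally show "(\<integral>s. (if f s = 0 then indicator A s * norm_deriv x (indicator A s *\<^sub>R x)
                 else norm_deriv (f s) (indicator A s *\<^sub>R x)) \<partial>M) = norm x * measure M A" .
qed

lemma smooth_point_L1_if_AE_nonzero:
  fixes f :: "'a \<Rightarrow> 'b::real_normed_vector"
  assumes smooth: "frechet_smooth_norm TYPE('b)" and f: "f \<in> L1 M" "L1norm M f \<noteq> 0"
    and nonzero: "AE s in M. f s \<noteq> 0"
  shows "smooth_point (L1 M) (L1norm M) f"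
proof (rule smooth_pointI)
  show "support_map (L1 M) (L1norm M) f
      (\<lambda>g. \<integral>s. (if f s = 0 then 0 else norm_deriv (f s) (g s)) \<partial>M)"
    using smooth f by (rule support_map_norm_deriv_0)
  show "(\<lambda>s. c *\<^sub>R g s) \<in> L1 M" if "g \<in> L1 M" for c and g :: "'a \<Rightarrow> 'b"
    using that by (rule L1_scaleR)
  fix G and g :: "'a \<Rightarrow> 'b"
  assume G: "support_map (L1 M) (L1norm M) f G" and g: "g \<in> L1 M"
  have "G g \<le> (\<integral>s. (if f s = 0 then norm (g s) else norm_deriv (f s) (g s)) \<partial>M)"
    using smooth f(1) g G by (rule support_map_le_integral_norm_deriv)
  also have "\<dots> = (\<integral>s. (if f s = 0 then 0 else norm_deriv (f s) (g s)) \<partial>M)"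
    using f(1) g nonzero unfolding L1_def
    by (intro integral_cong_AE borel_measurable_norm_deriv[OF smooth]
        borel_measurable_norm_strongly_measurable) auto
  finally show "G g \<le> (\<integral>s. (if f s = 0 then 0 else norm_deriv (f s) (g s)) \<partial>M)" .
qed

lemma AE_nonzero_if_smooth_point_L1:
  fixes f :: "'a \<Rightarrow> 'b::real_normed_vector"
  assumes "sigma_finite_measure M"
    and smooth: "frechet_smooth_norm TYPE('b)" and f: "f \<in> L1 M" "L1norm M f \<noteq> 0"
    and smooth_point: "smooth_point (L1 M) (L1norm M) f"
  shows "AE s in M. f s \<noteq> 0"
proof (rule ccontr)
  interpret sigma_finite_measure M by fact
  define Z where "Z = {s\<in>space M. f s = 0}"
  have Z: "Z \<in> sets M"
    unfolding Z_def using f(1) by (auto simp: L1_def intro: sets_Collect_zero_strongly_measurable)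
  assume "\<not> (AE s in M. f s \<noteq> 0)"
  then have "Z \<notin> null_sets M"
    unfolding Z_def by (simp add: AE_iff_null_sets)
  then obtain A where A: "A \<in> sets M" "A \<subseteq> Z" "0 < emeasure M A" "emeasure M A < \<infinity>"
    using Z by (auto simp: null_sets_def zero_less_iff_neq_zero intro: finite_positive_measure_subset)
  then have zero_on_A: "f s = 0" if "s \<in> A" for s
    using that by (auto simp: Z_def)
  obtain s0 where "f s0 \<noteq> 0"
    using f(2) by (force simp: L1norm_def)
  then obtain x :: 'b where x: "x \<noteq> 0"
    by blast
  have "(\<integral>s. (if f s = 0 then 0 else norm_deriv (f s) (indicator A s *\<^sub>R x)) \<partial>M)
      = (\<integral>s. (if f s = 0 then indicator A s * norm_deriv x (indicator A s *\<^sub>R x)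
              else norm_deriv (f s) (indicator A s *\<^sub>R x)) \<partial>M)"
    using smooth_point support_map_norm_deriv_0[OF smooth f]
      support_map_norm_deriv_indicator[OF smooth f A(1) x] L1_indicator_scaleR[OF A(1,4)]
    by (rule smooth_point_support_map_unique)
  moreover have "measure M A > 0"
    using A(3,4) by (simp add: measure_def enn2real_positive_iff)
  ultimately show False
    using integral_norm_deriv_indicator_scaleR[OF smooth A(1,4) zero_on_A x] x by simp
qed

end

theorem theorem3p1:
  fixes M :: "'s measure" and f :: "'s \<Rightarrow> 'x::banach"
  assumes "complete_measure M"
    and "frechet_smooth_norm TYPE('x)"
    and "f \<in> L1 M" and "L1norm M f \<noteq> 0"
  shows "((AE s in M. f s \<noteq> 0) \<longrightarrow> smooth_point (L1 M) (L1norm M) f)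
    \<and> ((sigma_finite_measure M \<and> smooth_point (L1 M) (L1norm M) f)
         \<longrightarrow> (AE s in M. f s \<noteq> 0))"
proof -
  interpret complete_measure M
    by fact
  show ?thesis
    using smooth_point_L1_if_AE_nonzero[OF assms(2-4)] AE_nonzero_if_smooth_point_L1[OF _ assms(2-4)]
    by blast
qed

end
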